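(* Let $\Theta$ be the set of $p\times p$ positive-definite matrices and assume $\mu_1\ne\mu_2$. For every constant $c>0$, the matrix $A=c(\Sigma_1/n_1+\Sigma_2/n_2)^{-1}$ maximizes $\Delta(A)/\{K_2(A)\}^{1/2}$ over $A\in\Theta$, i.e. $\Delta(A)/\{K_2(A)\}^{1/2}\le \Delta(c(\Sigma_1/n_1+\Sigma_2/n_2)^{-1})/\{K_2(c(\Sigma_1/n_1+\Sigma_2/n_2)^{-1})\}^{1/2}$ for all $A\in\Theta$.
   Context: Two populations on $\mathbb{R}^p$ have mean vectors $\mu_1,\mu_2$ and positive-definite covariance matrices $\Sigma_1,\Sigma_2$; $n_1,n_2$ are positive integers (sample sizes). For positive-definite $A$: $\mu_A=A^{1/2}(\mu_1-\mu_2)$, $\Sigma_{i,A}=A^{1/2}\Sigma_iA^{1/2}$, $\Delta(A)=\|\mu_A\|^2$, $K_2(A)=4\sum_{i=1}^2\mu_A^T\Sigma_{i,A}\mu_A/n_i$. *)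

theory Defs
  imports "HOL-Analysis.Analysis"
begin

definition pos_def_mat :: "real^'n^'n \<Rightarrow> bool" where
  "pos_def_mat A \<longleftrightarrow> transpose A = A \<and> (\<forall>x. x \<noteq> 0 \<longrightarrow> x \<bullet> (A *v x) > 0)"

definition mat_sqrt :: "real^'n^'n \<Rightarrow> real^'n^'n" where
  "mat_sqrt A = (THE B. pos_def_mat B \<and> B ** B = A)"

definition muA :: "real^'n^'n \<Rightarrow> real^'n \<Rightarrow> real^'n \<Rightarrow> real^'n" where
  "muA A mu1 mu2 = mat_sqrt A *v (mu1 - mu2)"

definition SigmaA :: "real^'n^'n \<Rightarrow> real^'n^'n \<Rightarrow> real^'n^'n" where
  "SigmaA A S = mat_sqrt A ** S ** mat_sqrt A"

definition Delta :: "real^'n^'n \<Rightarrow> real^'n \<Rightarrow> real^'n \<Rightarrow> real" where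
  "Delta A mu1 mu2 = (norm (muA A mu1 mu2))\<^sup>2"

definition K2 :: "real^'n^'n \<Rightarrow> real^'n \<Rightarrow> real^'n \<Rightarrow> real^'n^'n \<Rightarrow> real^'n^'n \<Rightarrow> nat \<Rightarrow> nat \<Rightarrow> real" where
  "K2 A mu1 mu2 S1 S2 n1 n2 =
     4 * (muA A mu1 mu2 \<bullet> (SigmaA A S1 *v muA A mu1 mu2) / real n1
        + muA A mu1 mu2 \<bullet> (SigmaA A S2 *v muA A mu1 mu2) / real n2)"

end

theory Submission
  imports Defs
begin

text \<open>
  Write \<open>d = \<mu>\<^sub>1 - \<mu>\<^sub>2\<close> and \<open>M = \<Sigma>\<^sub>1/n\<^sub>1 + \<Sigma>\<^sub>2/n\<^sub>2\<close>. Since \<open>A\<^sup>1\<^sup>/\<^sup>2\<close> is symmetric,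
  \<open>\<Delta>(A) = d \<bullet> Ad\<close> and \<open>K\<^sub>2(A) = 4 (Ad) \<bullet> M(Ad)\<close>, so with \<open>u = Ad\<close> the ratio is
  \<open>d \<bullet> u / (2 \<surd>(u \<bullet> Mu))\<close>. As \<open>d \<bullet> u = (M\<^sup>-\<^sup>1d) \<bullet> Mu\<close>, the Cauchy-Schwarz inequality for the
  inner product induced by \<open>M\<close> bounds this by \<open>\<surd>(d \<bullet> M\<^sup>-\<^sup>1d) / 2\<close>, which is attained at
  \<open>u = cM\<^sup>-\<^sup>1d\<close>. That \<open>mat_sqrt\<close> really is a symmetric square root needs existence and
  uniqueness of positive-definite square roots; both come from the spectral theorem for
  symmetric matrices, obtained by maximising the quadratic form on the unit sphere.
\<close>

section \<open>Symmetric matrices and their orthonormal eigenbases\<close>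

lemma symmetric_matrix_inner:
  fixes M :: "real^'n^'n"
  assumes "transpose M = M"
  shows "(M *v x) \<bullet> y = x \<bullet> (M *v y)"
  by (metis assms dot_lmul_matrix vector_transpose_matrix)

lemma symmetric_matrix_if_inner:
  fixes M :: "real^'n^'n"
  assumes "\<And>x y. (M *v x) \<bullet> y = x \<bullet> (M *v y)"
  shows "transpose M = M"
proof -
  have "transpose M *v x = M *v x" for x
  proof -
    have "(transpose M *v x - M *v x) \<bullet> y = 0" for y
      using dot_lmul_matrix[of x M y] assms[of x y] by (simp add: inner_diff_left)
    then show ?thesis
      by (metis eq_iff_diff_eq_0 inner_eq_zero_iff)
  qed
  then show ?thesis by (simp add: matrix_eq)
qed

lemma matrix_vector_mult_sum:
  fixes M :: "real^'n^'n"
  shows "M *v sum f E = (\<Sum>w\<in>E. M *v f w)"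
  using linear_sum[OF matrix_vector_mul_linear[of M]] by simp

lemma quadratic_nonpos_imp_linear_coeff_zero:
  fixes a b :: real
  assumes "\<And>t. 2 * t * a + t\<^sup>2 * b \<le> 0"
  shows "a = 0"
proof -
  define c where "c = \<bar>b\<bar> + 1"
  have "c > 0" "2 * c + b > 0" unfolding c_def by (auto simp: abs_if)
  have "(2 * (a/c) * a + (a/c)\<^sup>2 * b) * c\<^sup>2 \<le> 0"
    using assms[of "a/c"] by (simp add: mult_nonpos_nonneg)
  also have "(2 * (a/c) * a + (a/c)\<^sup>2 * b) * c\<^sup>2 = a\<^sup>2 * (2 * c + b)"
    using \<open>c > 0\<close> by (simp add: field_simps power2_eq_square)
  finally have "a\<^sup>2 \<le> 0"
    using \<open>2 * c + b > 0\<close> by (simp add: mult_le_0_iff)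
  then show ?thesis by simp
qed

text \<open>A unit vector maximising \<open>x \<bullet> Mx\<close> on \<open>S\<close> is an eigenvector: perturbing it by \<open>t w\<close> with
  \<open>w \<bottom> v\<close> shows \<open>w \<bullet> Mv = 0\<close>, so \<open>Mv\<close> has no component orthogonal to \<open>v\<close>.\<close>
lemma symmetric_matrix_eigenvector_in_invariant_subspace:
  fixes M :: "real^'n^'n"
  assumes sym: "transpose M = M" and S: "subspace S" and "x0 \<in> S" "x0 \<noteq> 0"
    and inv: "\<And>x. x \<in> S \<Longrightarrow> M *v x \<in> S"
  shows "\<exists>v\<in>S. norm v = 1 \<and> M *v v = (v \<bullet> (M *v v)) *\<^sub>R v"
proof -
  define K where "K = S \<inter> sphere 0 1"
  have "compact K" unfolding K_def
    by (metis Int_commute S closed_subspace compact_Int_closed compact_sphere)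
  have unit_in_K: "x /\<^sub>R norm x \<in> K" if "x \<in> S" "x \<noteq> 0" for x
    using that unfolding K_def by (simp add: S subspace_scale)
  then have "K \<noteq> {}" using \<open>x0 \<in> S\<close> \<open>x0 \<noteq> 0\<close> by blast
  have "continuous_on K (\<lambda>x. x \<bullet> (M *v x))"
    by (intro continuous_intros)
  then obtain v where "v \<in> K" and vmax: "\<And>x. x \<in> K \<Longrightarrow> x \<bullet> (M *v x) \<le> v \<bullet> (M *v v)"
    using continuous_attains_sup[OF \<open>compact K\<close> \<open>K \<noteq> {}\<close>] by blast
  define m where "m = v \<bullet> (M *v v)"
  have vS: "v \<in> S" and nv: "norm v = 1" using \<open>v \<in> K\<close> by (auto simp: K_def)
  have vv: "v \<bullet> v = 1" using nv by (simp add: norm_eq_1)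
  have rayleigh: "x \<bullet> (M *v x) \<le> m * (x \<bullet> x)" if "x \<in> S" for x
  proof (cases "x = 0")
    case False
    have "(x /\<^sub>R norm x) \<bullet> (M *v (x /\<^sub>R norm x)) \<le> m"
      using vmax[OF unit_in_K[OF that False]] by (simp add: m_def)
    then have "x \<bullet> (M *v x) / (norm x)\<^sup>2 \<le> m"
      by (simp add: matrix_vector_mult_scaleR power2_eq_square divide_inverse mult_ac)
    then show ?thesis
      using False by (simp add: divide_le_eq power2_norm_eq_inner)
  qed simp
  have orth: "w \<bullet> (M *v v) = 0" if "w \<in> S" "w \<bullet> v = 0" for w
  proof (rule quadratic_nonpos_imp_linear_coeff_zero)
    fix t
    have "v + t *\<^sub>R w \<in> S" using vS \<open>w \<in> S\<close> S by (simp add: subspace_add subspace_scale)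
    moreover have "v \<bullet> (M *v w) = w \<bullet> (M *v v)"
      using symmetric_matrix_inner[OF sym, of v w] by (simp add: inner_commute)
    ultimately show "2 * t * (w \<bullet> (M *v v)) + t\<^sup>2 * (w \<bullet> (M *v w) - m * (w \<bullet> w)) \<le> 0"
      using rayleigh[of "v + t *\<^sub>R w"] \<open>w \<bullet> v = 0\<close> vv unfolding m_def
      by (simp add: inner_add_left inner_add_right inner_commute power2_eq_square algebra_simps)
  qed
  define u where "u = M *v v - m *\<^sub>R v"
  have "u \<in> S" unfolding u_def using inv[OF vS] vS S by (simp add: subspace_diff subspace_scale)
  moreover have "u \<bullet> v = 0" unfolding u_def m_def using vv
    by (simp add: inner_diff_left inner_diff_right inner_commute)
  ultimately have "u \<bullet> u = 0"
    using orth unfolding u_def by (simp add: inner_diff_right)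
  then show ?thesis using vS nv unfolding u_def m_def by auto
qed

lemma symmetric_matrix_eigenbasis_of_invariant_subspace:
  fixes M :: "real^'n^'n"
  assumes sym: "transpose M = M"
  shows "subspace S \<Longrightarrow> (\<forall>x\<in>S. M *v x \<in> S) \<Longrightarrow>
    \<exists>B. B \<subseteq> S \<and> pairwise orthogonal B \<and> (\<forall>v\<in>B. norm v = 1 \<and> M *v v = (v \<bullet> (M *v v)) *\<^sub>R v)
      \<and> S \<subseteq> span B"
proof (induction "dim S" arbitrary: S rule: less_induct)
  case less
  show ?case
  proof (cases "S \<subseteq> {0}")
    case True then show ?thesis by (intro exI[of _ "{}"]) auto
  next
    case False
    then obtain x0 where "x0 \<in> S" "x0 \<noteq> 0" by auto
    from symmetric_matrix_eigenvector_in_invariant_subspace[OF sym less.prems(1) this] less.prems(2)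
    obtain v where vS: "v \<in> S" and nv: "norm v = 1" and ev: "M *v v = (v \<bullet> (M *v v)) *\<^sub>R v"
      by blast
    have vv: "v \<bullet> v = 1" using nv by (simp add: norm_eq_1)
    define S' where "S' = S \<inter> {x. v \<bullet> x = 0}"
    have sub': "subspace S'" unfolding S'_def
      using less.prems(1) subspace_hyperplane[of v] by (simp add: subspace_inter)
    have inv': "\<forall>x\<in>S'. M *v x \<in> S'"
    proof
      fix x assume x: "x \<in> S'"
      have "v \<bullet> (M *v x) = (M *v v) \<bullet> x" using symmetric_matrix_inner[OF sym, of v x] by simp
      also have "\<dots> = 0" using x ev unfolding S'_def
        by (metis (mono_tags, lifting) IntD2 inner_scaleR_left mem_Collect_eq mult_zero_right)
      finally show "M *v x \<in> S'" using x less.prems(2) unfolding S'_def by auto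
    qed
    have "S' \<subset> S" using vS vv unfolding S'_def
      by (metis (mono_tags, lifting) IntE inf_le1 mem_Collect_eq psubsetI zero_neq_one)
    then have "span S' \<subset> span S" using sub' less.prems(1) by (simp add: span_eq_iff[THEN iffD2])
    then have "dim S' < dim S" by (rule dim_psubset)
    from less.hyps[OF this sub' inv'] obtain B' where
      B'S: "B' \<subseteq> S'" and po: "pairwise orthogonal B'"
      and eig: "\<forall>w\<in>B'. norm w = 1 \<and> M *v w = (w \<bullet> (M *v w)) *\<^sub>R w" and sp: "S' \<subseteq> span B'"
      by blast
    show ?thesis
    proof (intro exI[of _ "insert v B'"] conjI)
      show "insert v B' \<subseteq> S" using B'S vS unfolding S'_def by auto
      have "orthogonal v w" if "w \<in> B'" for w using B'S that unfolding S'_def orthogonal_def by auto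
      then show "pairwise orthogonal (insert v B')" using po
        by (simp add: pairwise_insert orthogonal_commute)
      show "\<forall>w\<in>insert v B'. norm w = 1 \<and> M *v w = (w \<bullet> (M *v w)) *\<^sub>R w" using eig nv ev by auto
      show "S \<subseteq> span (insert v B')"
      proof
        fix x assume x: "x \<in> S"
        have "x - (v \<bullet> x) *\<^sub>R v \<in> S'" unfolding S'_def using x vS less.prems(1) vv
          by (simp add: subspace_diff subspace_scale inner_diff_right)
        then have "x - (v \<bullet> x) *\<^sub>R v \<in> span (insert v B')" using sp
          by (meson in_mono span_mono subset_insertI)
        moreover have "(v \<bullet> x) *\<^sub>R v \<in> span (insert v B')" by (simp add: span_base span_scale)
        ultimately have "(x - (v \<bullet> x) *\<^sub>R v) + (v \<bullet> x) *\<^sub>R v \<in> span (insert v B')"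
          by (rule span_add)
        then show "x \<in> span (insert v B')" by simp
      qed
    qed
  qed
qed

lemma inner_orthonormal_sum:
  fixes E :: "(real^'n) set"
  assumes "finite E" and "\<forall>v\<in>E. \<forall>w\<in>E. v \<bullet> w = (if v = w then 1 else 0)" and "v \<in> E"
  shows "v \<bullet> (\<Sum>w\<in>E. c w *\<^sub>R w) = c v"
proof -
  have "v \<bullet> (\<Sum>w\<in>E. c w *\<^sub>R w) = (\<Sum>w\<in>E. if w = v then c w else 0)"
    unfolding inner_sum_right by (rule sum.cong) (use assms in auto)
  also have "\<dots> = c v" using assms by simp
  finally show ?thesis .
qed

lemma symmetric_matrix_orthonormal_eigenbasis:
  fixes M :: "real^'n^'n"
  assumes "transpose M = M"
  obtains E where "finite E" "\<forall>v\<in>E. \<forall>w\<in>E. v \<bullet> w = (if v = w then 1 else 0)"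
    "\<forall>v\<in>E. M *v v = (v \<bullet> (M *v v)) *\<^sub>R v" "\<And>x. x = (\<Sum>w\<in>E. (w \<bullet> x) *\<^sub>R w)"
proof -
  obtain E where po: "pairwise orthogonal E"
    and eig: "\<forall>v\<in>E. norm v = 1 \<and> M *v v = (v \<bullet> (M *v v)) *\<^sub>R v" and sp: "UNIV \<subseteq> span E"
    using symmetric_matrix_eigenbasis_of_invariant_subspace[OF assms, of UNIV] by auto
  have fin: "finite E" using pairwise_orthogonal_imp_finite[OF po] .
  have on: "\<forall>v\<in>E. \<forall>w\<in>E. v \<bullet> w = (if v = w then 1 else 0)"
    using po eig by (auto simp: pairwise_def orthogonal_def norm_eq_1)
  have expand: "x = (\<Sum>w\<in>E. (w \<bullet> x) *\<^sub>R w)" for x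
  proof -
    define y where "y = x - (\<Sum>w\<in>E. (w \<bullet> x) *\<^sub>R w)"
    have "orthogonal y v" if "v \<in> E" for v
      using inner_orthonormal_sum[OF fin on that, of "\<lambda>w. w \<bullet> x"] that
      unfolding y_def orthogonal_def by (simp add: inner_diff_left inner_diff_right inner_commute)
    then have "orthogonal y y" using orthogonal_to_span[of y E y] sp by auto
    then show ?thesis unfolding y_def orthogonal_def by simp
  qed
  show ?thesis
    by (rule that[OF fin on _ expand]) (use eig in blast)
qed

section \<open>Positive-definite square roots\<close>

lemma pos_def_mat_sqrt_exists:
  fixes A :: "real^'n^'n"
  assumes pd: "pos_def_mat A"
  shows "\<exists>B. pos_def_mat B \<and> B ** B = A"
proof -
  have "transpose A = A" using pd unfolding pos_def_mat_def by blast
  then obtain E where fin: "finite E" and on: "\<forall>v\<in>E. \<forall>w\<in>E. v \<bullet> w = (if v = w then 1 else 0)"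
    and ev: "\<forall>v\<in>E. A *v v = (v \<bullet> (A *v v)) *\<^sub>R v" and ex: "\<And>x. x = (\<Sum>w\<in>E. (w \<bullet> x) *\<^sub>R w)"
    using symmetric_matrix_orthonormal_eigenbasis by blast
  define lam where "lam v = v \<bullet> (A *v v)" for v
  have lpos: "lam v > 0" if "v \<in> E" for v
  proof -
    have "v \<noteq> 0" using on that by force
    then show ?thesis using pd unfolding lam_def pos_def_mat_def by blast
  qed
  define g where "g x = (\<Sum>w\<in>E. (sqrt (lam w) * (w \<bullet> x)) *\<^sub>R w)" for x
  have "linear g"
    by (auto intro!: linearI simp: g_def inner_add_right distrib_left scaleR_add_left sum.distrib
        scaleR_sum_right mult_ac)
  define B where "B = matrix g"
  have Bg: "B *v x = g x" for x
    unfolding B_def using matrix_vector_mul(2)[OF \<open>linear g\<close>] by metis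
  have "transpose B = B"
    by (rule symmetric_matrix_if_inner)
      (simp add: Bg g_def inner_sum_left inner_sum_right inner_commute mult_ac)
  moreover have "x \<bullet> (B *v x) > 0" if "x \<noteq> 0" for x
  proof -
    obtain w where "w \<in> E" "w \<bullet> x \<noteq> 0"
      using ex[of x] \<open>x \<noteq> 0\<close> by (metis (no_types, lifting) scale_eq_0_iff sum.neutral)
    have "x \<bullet> (B *v x) = (\<Sum>w\<in>E. sqrt (lam w) * (w \<bullet> x)\<^sup>2)"
      unfolding Bg g_def by (simp add: inner_sum_right inner_commute power2_eq_square mult_ac)
    also have "\<dots> > 0"
      using \<open>w \<in> E\<close> \<open>w \<bullet> x \<noteq> 0\<close> lpos fin by (intro sum_pos2) (auto simp: less_imp_le)
    finally show ?thesis .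
  qed
  moreover have "(B ** B) *v x = A *v x" for x
  proof -
    have "(B ** B) *v x = (\<Sum>w\<in>E. (lam w * (w \<bullet> x)) *\<^sub>R w)"
      unfolding Bg matrix_vector_mul_assoc[symmetric] g_def[of "g x"]
      using inner_orthonormal_sum[OF fin on] lpos
      by (intro sum.cong) (auto simp: g_def real_sqrt_mult_self less_imp_le mult.assoc[symmetric])
    also have "\<dots> = (\<Sum>w\<in>E. (w \<bullet> x) *\<^sub>R (A *v w))"
    proof (rule sum.cong)
      fix w assume "w \<in> E"
      then have "A *v w = lam w *\<^sub>R w" using ev unfolding lam_def by blast
      then show "(lam w * (w \<bullet> x)) *\<^sub>R w = (w \<bullet> x) *\<^sub>R (A *v w)" by simp
    qed simp
    also have "\<dots> = A *v (\<Sum>w\<in>E. (w \<bullet> x) *\<^sub>R w)"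
      by (simp add: matrix_vector_mult_sum matrix_vector_mult_scaleR)
    finally show ?thesis using ex[of x] by simp
  qed
  ultimately show ?thesis
    unfolding pos_def_mat_def by (metis matrix_eq)
qed

text \<open>If \<open>B\<^sup>2 = C\<^sup>2\<close> then \<open>D = B - C\<close> satisfies \<open>BD + DC = 0\<close>; an eigenvector \<open>v\<close> of \<open>D\<close> with
  eigenvalue \<open>\<lambda>\<close> gives \<open>\<lambda> (v \<bullet> Bv + v \<bullet> Cv) = 0\<close>, so every eigenvalue of \<open>D\<close> vanishes.\<close>
lemma pos_def_mat_sqrt_unique:
  fixes A B C :: "real^'n^'n"
  assumes "pos_def_mat B" "pos_def_mat C" "B ** B = A" "C ** C = A"
  shows "B = C"
proof -
  define D where "D = B - C"
  have tD: "transpose D = D" using assms(1,2) unfolding D_def pos_def_mat_def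
    by (simp add: transpose_def vec_eq_iff)
  have BD_DC: "B *v (D *v x) + D *v (C *v x) = 0" for x
  proof -
    have "B *v (D *v x) + D *v (C *v x)
        = B *v (B *v x) - B *v (C *v x) + (B *v (C *v x) - C *v (C *v x))"
      unfolding D_def
      by (simp add: matrix_vector_mult_diff_distrib matrix_vector_mult_diff_rdistrib)
    also have "\<dots> = (B ** B) *v x - (C ** C) *v x"
      by (simp add: matrix_vector_mul_assoc)
    finally have "B *v (D *v x) + D *v (C *v x) = (B ** B) *v x - (C ** C) *v x" .
    then show ?thesis using assms(3,4) by simp
  qed
  obtain E where "finite E" and on: "\<forall>v\<in>E. \<forall>w\<in>E. v \<bullet> w = (if v = w then 1 else 0)"
    and ev: "\<forall>v\<in>E. D *v v = (v \<bullet> (D *v v)) *\<^sub>R v" and ex: "\<And>x. x = (\<Sum>w\<in>E. (w \<bullet> x) *\<^sub>R w)"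
    using symmetric_matrix_orthonormal_eigenbasis[OF tD] by blast
  have "D *v v = 0" if "v \<in> E" for v
  proof -
    define lam where "lam = v \<bullet> (D *v v)"
    have "v \<noteq> 0" using on that by force
    have Dv: "D *v v = lam *\<^sub>R v" using ev that unfolding lam_def by blast
    have "0 = v \<bullet> (B *v (D *v v) + D *v (C *v v))"
      by (simp add: BD_DC)
    also have "\<dots> = lam * (v \<bullet> (B *v v) + v \<bullet> (C *v v))"
      using symmetric_matrix_inner[OF tD, of v "C *v v"]
      by (simp add: Dv inner_add_right algebra_simps)
    finally have "lam * (v \<bullet> (B *v v) + v \<bullet> (C *v v)) = 0" by simp
    moreover have "v \<bullet> (B *v v) + v \<bullet> (C *v v) > 0"
      using assms(1,2) \<open>v \<noteq> 0\<close> unfolding pos_def_mat_def by (simp add: add_pos_pos)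
    ultimately show ?thesis using Dv by simp
  qed
  then have "D *v x = 0" for x
    by (subst ex[of x]) (simp add: matrix_vector_mult_sum matrix_vector_mult_scaleR)
  then have "D = 0" by (simp add: matrix_eq)
  then show ?thesis unfolding D_def by simp
qed

lemma
  fixes A :: "real^'n^'n"
  assumes "pos_def_mat A"
  shows pos_def_mat_mat_sqrt: "pos_def_mat (mat_sqrt A)"
    and mat_sqrt_mult_self: "mat_sqrt A ** mat_sqrt A = A"
proof -
  have "\<exists>!B. pos_def_mat B \<and> B ** B = A"
    using pos_def_mat_sqrt_exists[OF assms] pos_def_mat_sqrt_unique by blast
  then have "pos_def_mat (mat_sqrt A) \<and> mat_sqrt A ** mat_sqrt A = A"
    unfolding mat_sqrt_def by (rule theI')
  then show "pos_def_mat (mat_sqrt A)" "mat_sqrt A ** mat_sqrt A = A" by auto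
qed

section \<open>The criterion as a ratio of quadratic forms\<close>

lemma Delta_eq_quadratic_form:
  fixes A :: "real^'n^'n"
  assumes "pos_def_mat A"
  shows "Delta A mu1 mu2 = (mu1 - mu2) \<bullet> (A *v (mu1 - mu2))"
proof -
  define B where "B = mat_sqrt A"
  have "transpose B = B" "B ** B = A"
    using pos_def_mat_mat_sqrt[OF assms] mat_sqrt_mult_self[OF assms]
    unfolding B_def pos_def_mat_def by auto
  then show ?thesis
    unfolding Delta_def muA_def B_def[symmetric] power2_norm_eq_inner
    by (simp add: symmetric_matrix_inner matrix_vector_mul_assoc)
qed

lemma K2_eq_quadratic_form:
  fixes A S1 S2 :: "real^'n^'n"
  assumes "pos_def_mat A"
  shows "K2 A mu1 mu2 S1 S2 n1 n2 = 4 * ((A *v (mu1 - mu2)) \<bullet>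
          (((1 / real n1) *\<^sub>R S1 + (1 / real n2) *\<^sub>R S2) *v (A *v (mu1 - mu2))))"
proof -
  define B where "B = mat_sqrt A"
  define u where "u = A *v (mu1 - mu2)"
  have tB: "transpose B = B" and BB: "B ** B = A"
    using pos_def_mat_mat_sqrt[OF assms] mat_sqrt_mult_self[OF assms]
    unfolding B_def pos_def_mat_def by auto
  have "muA A mu1 mu2 \<bullet> (SigmaA A S *v muA A mu1 mu2) = u \<bullet> (S *v u)" for S
  proof -
    have "muA A mu1 mu2 \<bullet> (SigmaA A S *v muA A mu1 mu2)
        = (B *v (mu1 - mu2)) \<bullet> (B *v (S *v (B *v (B *v (mu1 - mu2)))))"
      unfolding muA_def SigmaA_def B_def[symmetric]
      by (simp add: matrix_vector_mul_assoc matrix_mul_assoc)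
    also have "\<dots> = u \<bullet> (S *v u)"
      unfolding u_def BB[symmetric] matrix_vector_mul_assoc[symmetric]
      by (rule symmetric_matrix_inner[OF tB, symmetric])
    finally show ?thesis .
  qed
  then show ?thesis
    unfolding K2_def u_def[symmetric]
    by (simp add: matrix_vector_mult_add_rdistrib scaleR_matrix_vector_assoc[symmetric]
        inner_add_right divide_inverse mult_ac)
qed

lemma pos_def_mat_add:
  fixes A B :: "real^'n^'n"
  assumes "pos_def_mat A" "pos_def_mat B"
  shows "pos_def_mat (A + B)"
  using assms unfolding pos_def_mat_def
  by (simp add: transpose_def vec_eq_iff matrix_vector_mult_add_rdistrib inner_add_right add_pos_pos)

lemma pos_def_mat_scaleR:
  fixes A :: "real^'n^'n"
  assumes "pos_def_mat A" "c > 0"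
  shows "pos_def_mat (c *\<^sub>R A)"
  using assms unfolding pos_def_mat_def
  by (simp add: transpose_scalar scaleR_matrix_vector_assoc[symmetric])

lemma pos_def_mat_nonneg:
  fixes A :: "real^'n^'n"
  assumes "pos_def_mat A"
  shows "x \<bullet> (A *v x) \<ge> 0"
  using assms unfolding pos_def_mat_def by (cases "x = 0") (auto simp: less_imp_le)

lemma pos_def_mat_invertible:
  fixes A :: "real^'n^'n"
  assumes "pos_def_mat A"
  shows "invertible A"
proof -
  have "x = 0" if "A *v x = 0" for x
    using assms that unfolding pos_def_mat_def by force
  then show ?thesis
    unfolding invertible_left_inverse matrix_left_invertible_ker by blast
qed

lemma matrix_inv_inverse:
  fixes A :: "real^'n^'n"
  assumes "invertible A"
  shows "A ** matrix_inv A = mat 1" "matrix_inv A ** A = mat 1"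
  using someI_ex[OF assms[unfolded invertible_def]] unfolding matrix_inv_def by auto

lemma pos_def_mat_matrix_inv:
  fixes A :: "real^'n^'n"
  assumes "pos_def_mat A"
  shows "pos_def_mat (matrix_inv A)"
proof -
  have inv: "A *v (matrix_inv A *v x) = x" for x
    using matrix_inv_inverse(1)[OF pos_def_mat_invertible[OF assms]]
    by (simp add: matrix_vector_mul_assoc)
  have symA: "(A *v x) \<bullet> y = x \<bullet> (A *v y)" for x y
    using assms symmetric_matrix_inner unfolding pos_def_mat_def by blast
  have "transpose (matrix_inv A) = matrix_inv A"
    by (rule symmetric_matrix_if_inner) (metis inv symA)
  moreover have "x \<bullet> (matrix_inv A *v x) > 0" if "x \<noteq> 0" for x
  proof -
    have "matrix_inv A *v x \<noteq> 0" using inv[of x] that by auto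
    then have "(matrix_inv A *v x) \<bullet> (A *v (matrix_inv A *v x)) > 0"
      using assms unfolding pos_def_mat_def by blast
    then show ?thesis by (simp add: inv inner_commute)
  qed
  ultimately show ?thesis unfolding pos_def_mat_def by blast
qed

lemma pos_def_mat_cauchy_schwarz:
  fixes M :: "real^'n^'n"
  assumes "pos_def_mat M"
  shows "(x \<bullet> (M *v y))\<^sup>2 \<le> (x \<bullet> (M *v x)) * (y \<bullet> (M *v y))"
proof (cases "y = 0")
  case False
  define a where "a = y \<bullet> (M *v y)"
  define b where "b = x \<bullet> (M *v y)"
  have "a > 0" using assms False unfolding a_def pos_def_mat_def by blast
  have "y \<bullet> (M *v x) = b"
    using assms symmetric_matrix_inner[of M y x] unfolding pos_def_mat_def b_def
    by (simp add: inner_commute)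
  then have expand: "(x - t *\<^sub>R y) \<bullet> (M *v (x - t *\<^sub>R y)) = x \<bullet> (M *v x) - 2 * t * b + t\<^sup>2 * a" for t
    unfolding a_def b_def
    by (simp add: matrix_vector_mult_diff_distrib inner_diff_left inner_diff_right
        power2_eq_square algebra_simps)
  have "x \<bullet> (M *v x) - 2 * (b/a) * b + (b/a)\<^sup>2 * a \<ge> 0"
    using pos_def_mat_nonneg[OF assms, of "x - (b/a) *\<^sub>R y"] unfolding expand .
  then have "x \<bullet> (M *v x) - b\<^sup>2 / a \<ge> 0"
    using \<open>a > 0\<close> by (simp add: field_simps power2_eq_square)
  then show ?thesis
    using \<open>a > 0\<close> unfolding a_def[symmetric] b_def[symmetric] by (simp add: field_simps)
qed simp

text \<open>Cauchy-Schwarz for the inner product \<open>x \<bullet> My\<close>, applied to \<open>d \<bullet> u = (M\<^sup>-\<^sup>1d) \<bullet> Mu\<close>.\<close>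
lemma pos_def_mat_inner_le_dual_norms:
  fixes M :: "real^'n^'n"
  assumes "pos_def_mat M"
  shows "d \<bullet> u \<le> sqrt (d \<bullet> (matrix_inv M *v d)) * sqrt (u \<bullet> (M *v u))"
proof -
  define z where "z = matrix_inv M *v d"
  have Mz: "M *v z = d"
    using matrix_inv_inverse(1)[OF pos_def_mat_invertible[OF assms]]
    unfolding z_def by (simp add: matrix_vector_mul_assoc)
  have "d \<bullet> u = z \<bullet> (M *v u)"
    using assms symmetric_matrix_inner[of M z u] unfolding pos_def_mat_def Mz by simp
  then have "(d \<bullet> u)\<^sup>2 \<le> (d \<bullet> z) * (u \<bullet> (M *v u))"
    using pos_def_mat_cauchy_schwarz[OF assms, of z u] by (simp add: Mz inner_commute)
  then show ?thesis
    unfolding z_def by (metis real_le_rsqrt real_sqrt_mult)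
qed

section \<open>The optimal weight matrix\<close>

lemma Delta_over_sqrt_K2_eq:
  fixes A S1 S2 :: "real^'n^'n" and mu1 mu2 :: "real^'n" and n1 n2 :: nat
  assumes "pos_def_mat A"
  defines "M \<equiv> (1 / real n1) *\<^sub>R S1 + (1 / real n2) *\<^sub>R S2" and "d \<equiv> mu1 - mu2"
  shows "Delta A mu1 mu2 / sqrt (K2 A mu1 mu2 S1 S2 n1 n2)
    = d \<bullet> (A *v d) / (2 * sqrt ((A *v d) \<bullet> (M *v (A *v d))))"
  unfolding Delta_eq_quadratic_form[OF assms(1)] K2_eq_quadratic_form[OF assms(1)] M_def d_def
  by (simp add: real_sqrt_mult)

lemma Delta_over_sqrt_K2_le:
  fixes A S1 S2 :: "real^'n^'n"
  assumes "pos_def_mat A" "pos_def_mat ((1 / real n1) *\<^sub>R S1 + (1 / real n2) *\<^sub>R S2)"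
  shows "Delta A mu1 mu2 / sqrt (K2 A mu1 mu2 S1 S2 n1 n2)
    \<le> sqrt ((mu1 - mu2) \<bullet> (matrix_inv ((1 / real n1) *\<^sub>R S1 + (1 / real n2) *\<^sub>R S2) *v (mu1 - mu2))) / 2"
proof -
  define d where "d = mu1 - mu2"
  define M where "M = (1 / real n1) *\<^sub>R S1 + (1 / real n2) *\<^sub>R S2"
  define a where "a = (A *v d) \<bullet> (M *v (A *v d))"
  have "d \<bullet> (A *v d) \<le> sqrt (d \<bullet> (matrix_inv M *v d)) * sqrt a"
    using pos_def_mat_inner_le_dual_norms[OF assms(2)] unfolding a_def M_def by blast
  moreover have "a \<ge> 0" "d \<bullet> (matrix_inv M *v d) \<ge> 0"
    using pos_def_mat_nonneg assms(2) pos_def_mat_matrix_inv[OF assms(2)] unfolding a_def M_def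
    by blast+
  ultimately have "d \<bullet> (A *v d) / (2 * sqrt a) \<le> sqrt (d \<bullet> (matrix_inv M *v d)) / 2"
    by (cases "a = 0") (simp_all add: divide_le_eq mult.commute)
  then show ?thesis
    unfolding Delta_over_sqrt_K2_eq[OF assms(1)] M_def d_def a_def .
qed

lemma Delta_over_sqrt_K2_scaled_inverse:
  fixes S1 S2 :: "real^'n^'n"
  assumes "pos_def_mat ((1 / real n1) *\<^sub>R S1 + (1 / real n2) *\<^sub>R S2)" (is "pos_def_mat ?M")
    and "c > 0"
  shows "Delta (c *\<^sub>R matrix_inv ?M) mu1 mu2 / sqrt (K2 (c *\<^sub>R matrix_inv ?M) mu1 mu2 S1 S2 n1 n2)
    = sqrt ((mu1 - mu2) \<bullet> (matrix_inv ?M *v (mu1 - mu2))) / 2"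
proof -
  define d where "d = mu1 - mu2"
  define q where "q = d \<bullet> (matrix_inv ?M *v d)"
  have pd: "pos_def_mat (c *\<^sub>R matrix_inv ?M)"
    using pos_def_mat_scaleR[OF pos_def_mat_matrix_inv[OF assms(1)] assms(2)] .
  have "q \<ge> 0"
    unfolding q_def by (rule pos_def_mat_nonneg[OF pos_def_mat_matrix_inv[OF assms(1)]])
  have MMi: "?M *v (matrix_inv ?M *v d) = d"
    using matrix_inv_inverse(1)[OF pos_def_mat_invertible[OF assms(1)]]
    by (simp add: matrix_vector_mul_assoc)
  have "Delta (c *\<^sub>R matrix_inv ?M) mu1 mu2 / sqrt (K2 (c *\<^sub>R matrix_inv ?M) mu1 mu2 S1 S2 n1 n2)
      = c * q / (2 * sqrt (c\<^sup>2 * q))"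
    unfolding Delta_over_sqrt_K2_eq[OF pd] d_def[symmetric] q_def
    by (simp add: scaleR_matrix_vector_assoc[symmetric] matrix_vector_mult_scaleR MMi
        inner_commute power2_eq_square)
  also have "\<dots> = sqrt q / 2"
    using \<open>c > 0\<close> \<open>q \<ge> 0\<close> by (cases "q = 0") (simp_all add: real_sqrt_mult field_simps)
  finally show ?thesis unfolding q_def d_def .
qed

theorem propositionS1p1:
  fixes mu1 mu2 :: "real^'n" and S1 S2 A :: "real^'n^'n" and n1 n2 :: nat and c :: real
  assumes "pos_def_mat S1" and "pos_def_mat S2"
    and "n1 > 0" and "n2 > 0"
    and "mu1 \<noteq> mu2"
    and "c > 0"
    and "pos_def_mat A"
  shows "Delta A mu1 mu2 / sqrt (K2 A mu1 mu2 S1 S2 n1 n2)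
    \<le> Delta (c *\<^sub>R matrix_inv ((1 / real n1) *\<^sub>R S1 + (1 / real n2) *\<^sub>R S2)) mu1 mu2
       / sqrt (K2 (c *\<^sub>R matrix_inv ((1 / real n1) *\<^sub>R S1 + (1 / real n2) *\<^sub>R S2)) mu1 mu2 S1 S2 n1 n2)"
proof -
  have pd: "pos_def_mat ((1 / real n1) *\<^sub>R S1 + (1 / real n2) *\<^sub>R S2)"
    using assms(1-4) by (simp add: pos_def_mat_add pos_def_mat_scaleR)
  from Delta_over_sqrt_K2_le[OF assms(7) pd] show ?thesis
    unfolding Delta_over_sqrt_K2_scaled_inverse[OF pd assms(6)] .
qed

end
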